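(* With the notation in the context, the following identity of linear endomorphisms of $\mathbb C^{\mathcal L(\Omega)}$ holds: $(q^2-1)\big(L_1(x_0)R_1(x_0)-R_1(x_0)L_1(x_0)\big)=q^DD_1(x_0)D_2(x_0)-(q^2-1)D_3(x_0)-D_4(x_0)$.
   Context: $\Omega$ is a $D$-dimensional vector space over a finite field $\mathbb F$ and $q=\sqrt{|\mathbb F|}$. $\mathcal L(\Omega)$ is the set of subspaces of $\Omega$ and $\mathbb C^{\mathcal L(\Omega)}$ the complex vector space with basis $\mathcal L(\Omega)$; $x'\subset\mathrel{\cdot} x$ means $x'\subseteq x$ with $\dim x'=\dim x-1$; $|y|$ denotes the cardinality of a subspace $y$ (so $|y|=q^{2\dim y}$). Fix subspaces $x_0,x_1$ with $\Omega=x_0\oplus x_1$; for $u\in\Omega$ write $u=u_0+u_1$ with $u_0\in x_0$, $u_1\in x_1$. For $x\in\mathcal L(\Omega)$ let $\tau(x):(x+x_0)/x_0\to x_0/(x\cap x_0)$ be the linear map $u+x_0\mapsto u_0+(x\cap x_0)$ ($u\in x$). Linear maps on $\mathbb C^{\mathcal L(\Omega)}$ are defined on the basis by: $L_1(x_0)x=\sum x'$ over $x'\subset\mathrel{\cdot} x$ with $x'\cap x_0=x\cap x_0$; $L_2(x_0)x=\sum x'$ over $x'\subset\mathrel{\cdot} x$ with $x'+x_0=x+x_0$; $R_1(x_0)x=\sum x'$ over $x\subset\mathrel{\cdot} x'$ with $x'\cap x_0=x\cap x_0$; $R_2(x_0)x=\sum x'$ over $x\subset\mathrel{\cdot} x'$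 with $x'+x_0=x+x_0$; $D_1(x_0)x=q^{\dim(\Omega/x_0)-2\dim((x+x_0)/x_0)}x$; $D_2(x_0)x=q^{\dim x_0-2\dim(x\cap x_0)}x$; $D_3(x_0)x=\sum x'$ over $x'\in\mathcal L(\Omega)$ with $x'+x_0=x+x_0$, $x'\cap x_0=x\cap x_0$ and $\operatorname{rank}(\tau(x')-\tau(x))=1$; $D_4(x_0)x=\big(\frac{|x|+|x_0|}{|x\cap x_0|}-1\big)x$. *)

theory Defs
  imports "HOL-Analysis.Analysis"
begin

text \<open>Omega is the D-dimensional space 'a^'n over the finite field 'a, D = CARD('n).
 A linear endomorphism A of C^{L(Omega)} is represented by its matrix coefficients:
 A x y = coefficient of the basis vector y in A(x).\<close>

type_synonym ('a,'n) lop = "('a^'n) set \<Rightarrow> ('a^'n) set \<Rightarrow> complex"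

definition Lsp :: "('a::field ^ 'n) set set" where
  "Lsp = {x. vec.subspace x}"

definition qF :: "'a::{field,finite} itself \<Rightarrow> real" where
  "qF _ = sqrt (real CARD('a))"

definition ssum :: "('a::field ^ 'n) set \<Rightarrow> ('a ^ 'n) set \<Rightarrow> ('a ^ 'n) set" where
  "ssum A B = {a + b | a b. a \<in> A \<and> b \<in> B}"

definition covered :: "('a::field ^ 'n) set \<Rightarrow> ('a ^ 'n) set \<Rightarrow> bool" where
  "covered x' x \<longleftrightarrow> vec.subspace x' \<and> vec.subspace x \<and> x' \<subseteq> x \<and> vec.dim x' + 1 = vec.dim x"

definition opcomp :: "('a::{field,finite},'n::finite) lop \<Rightarrow> ('a,'n) lop \<Rightarrow> ('a,'n) lop" where
  "opcomp A B x z = (\<Sum>y\<in>Lsp. B x y * A y z)"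

definition L1 :: "('a::{field,finite} ^ 'n::finite) set \<Rightarrow> ('a,'n) lop" where
  "L1 x0 x x' = (if covered x' x \<and> x' \<inter> x0 = x \<inter> x0 then 1 else 0)"

definition R1 :: "('a::{field,finite} ^ 'n::finite) set \<Rightarrow> ('a,'n) lop" where
  "R1 x0 x x' = (if covered x x' \<and> x' \<inter> x0 = x \<inter> x0 then 1 else 0)"

definition D1 :: "('a::{field,finite} ^ 'n::finite) set \<Rightarrow> ('a,'n) lop" where
  "D1 x0 x y = (if y = x then complex_of_real (qF TYPE('a) powr
      (real (CARD('n) - vec.dim x0) - 2 * (real (vec.dim (ssum x x0)) - real (vec.dim x0)))) else 0)"

definition D2 :: "('a::{field,finite} ^ 'n::finite) set \<Rightarrow> ('a,'n) lop" where
  "D2 x0 x y = (if y = x then complex_of_real (qF TYPE('a) powr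
      (real (vec.dim x0) - 2 * real (vec.dim (x \<inter> x0)))) else 0)"

definition D4 :: "('a::{field,finite} ^ 'n::finite) set \<Rightarrow> ('a,'n) lop" where
  "D4 x0 x y = (if y = x then
      complex_of_real ((real (card x) + real (card x0)) / real (card (x \<inter> x0)) - 1) else 0)"

text \<open>cosets, the x0-component of a vector w.r.t. Omega = x0 (+) x1, and the map tau(x)
  from (x+x0)/x0 to x0/(x cap x0), acting on cosets (as sets)\<close>
definition coset :: "('a::field ^ 'n) \<Rightarrow> ('a ^ 'n) set \<Rightarrow> ('a ^ 'n) set" where
  "coset u W = (\<lambda>w. u + w) ` W"

definition proj0 :: "('a::field ^ 'n) set \<Rightarrow> ('a ^ 'n) set \<Rightarrow> 'a ^ 'n \<Rightarrow> 'a ^ 'n" where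
  "proj0 x0 x1 u = (THE a. a \<in> x0 \<and> u - a \<in> x1)"

definition tau :: "('a::field ^ 'n) set \<Rightarrow> ('a ^ 'n) set \<Rightarrow> ('a ^ 'n) set \<Rightarrow> ('a ^ 'n) set \<Rightarrow> ('a ^ 'n) set" where
  "tau x0 x1 x C = coset (proj0 x0 x1 (SOME u. u \<in> x \<and> coset u x0 = C)) (x \<inter> x0)"

text \<open>rank of tau(x') - tau(x) (x, x' with equal x+x0 and equal x cap x0): the image is a
 subspace of x0/W, W = x cap x0; its dimension is dim(union of the image cosets) - dim W\<close>
definition tau_diff_rank :: "('a::field ^ 'n) set \<Rightarrow> ('a ^ 'n) set \<Rightarrow> ('a ^ 'n) set \<Rightarrow> ('a ^ 'n) set \<Rightarrow> nat" where
  "tau_diff_rank x0 x1 x' x =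
     (let dom = {coset u x0 | u. u \<in> x};
          dif = (\<lambda>C. {a - b | a b. a \<in> tau x0 x1 x' C \<and> b \<in> tau x0 x1 x C})
      in vec.dim (\<Union> (dif ` dom)) - vec.dim (x \<inter> x0))"

definition D3 :: "('a::{field,finite} ^ 'n::finite) set \<Rightarrow> ('a ^ 'n) set \<Rightarrow> ('a,'n) lop" where
  "D3 x0 x1 x x' = (if vec.subspace x' \<and> ssum x' x0 = ssum x x0 \<and> x' \<inter> x0 = x \<inter> x0
        \<and> tau_diff_rank x0 x1 x' x = 1 then 1 else 0)"

end

theory Submission
  imports Defs
begin

(*
  The entries of L1 R1 and R1 L1 at (x, z) count the common upper, respectively lower,
  covers y of x and z with y \<inter> x0 = x \<inter> x0 = z \<inter> x0.  For z \<noteq> x the only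
  candidates are x + z and x \<inter> z.  Both are covers exactly when x \<inter> z has codimension
  one in x and z, and then the two counts differ precisely when (x + z) \<inter> x0 is strictly
  larger than x \<inter> x0.  As the image of tau(z) - tau(x) is ((x + z) \<inter> x0)/(x \<inter> x0),
  this is the condition rank (tau(z) - tau(x)) = 1 defining D3.

  For z = x put Q = q^2, k = dim x and w = dim (x \<inter> x0).  The upper covers of x meeting
  x0 only in x \<inter> x0 are those not contained in x + x0; there are
  (Q^(D-k) - Q^(dim x0 - w))/(Q - 1) of them.  Taking orthogonal complements, the lower
  covers of x containing x \<inter> x0 correspond to the upper covers of x^perp inside
  (x \<inter> x0)^perp, so there are (Q^(k-w) - 1)/(Q - 1) of them.  Multiplied by Q - 1, the
  difference is Q^(D-k) - (|x| + |x0|)/|x \<inter> x0| + 1, the diagonal entry of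
  q^D D1 D2 - D4.
*)

subsection \<open>Counting in finite vector spaces\<close>

lemma one_less_card_field: "1 < CARD('a::{field,finite})"
proof -
  have "card {0::'a, 1} \<le> CARD('a)" by (rule card_mono) simp_all
  then show ?thesis by simp
qed

lemma card_subspace:
  fixes V :: "('a::{field,finite} ^ 'n::finite) set"
  assumes "vec.subspace V"
  shows "card V = CARD('a) ^ vec.dim V"
proof -
  obtain B where B: "B \<subseteq> V" "vec.independent B" "V \<subseteq> vec.span B" "card B = vec.dim V"
    using vec.basis_exists by blast
  have span_B: "vec.span B = V"
    using B assms by (simp add: vec.span_subspace)
  let ?f = "\<lambda>c. \<Sum>v\<in>B. c v *s v"
  have inj: "inj_on ?f (B \<rightarrow>\<^sub>E UNIV)"
  proof (rule inj_onI)
    fix c d assume c: "c \<in> B \<rightarrow>\<^sub>E UNIV" and d: "d \<in> B \<rightarrow>\<^sub>E UNIV" and eq: "?f c = ?f d"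
    have "(\<Sum>v\<in>B. (c v - d v) *s v) = 0"
      using eq by (simp add: sum_subtractf vec.scale_left_diff_distrib)
    then have "\<forall>v\<in>B. c v - d v = 0"
      using B(2) unfolding vec.independent_explicit by (auto dest: spec[of _ "\<lambda>v. c v - d v"])
    then show "c = d" using c d by (intro extensionalityI[of _ B]) (auto simp: PiE_def)
  qed
  have "range ?f = ?f ` (B \<rightarrow>\<^sub>E UNIV)"
  proof (intro equalityI subsetI)
    fix y assume "y \<in> range ?f"
    then obtain c where c: "y = ?f c" by auto
    have "y = ?f (restrict c B)" using c by (auto intro: sum.cong)
    then show "y \<in> ?f ` (B \<rightarrow>\<^sub>E UNIV)" by (rule image_eqI[where x="restrict c B"]) auto
  qed auto
  then have img: "?f ` (B \<rightarrow>\<^sub>E UNIV) = V"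
    using vec.span_finite[of B] span_B by simp
  have "card V = card (B \<rightarrow>\<^sub>E (UNIV::'a set))"
    using card_image[OF inj] img by simp
  also have "\<dots> = CARD('a) ^ card B" by (simp add: card_PiE)
  finally show ?thesis using B(4) by simp
qed

lemma dim_eq_if_card_eq_power:
  fixes V :: "('a::{field,finite} ^ 'n::finite) set"
  assumes "vec.subspace V" "card V = CARD('a) ^ k"
  shows "vec.dim V = k"
  using card_subspace[OF assms(1)] assms(2) power_inject_exp[OF one_less_card_field] by metis

lemma finite_Lsp: "finite (Lsp :: ('a::{field,finite} ^ 'n::finite) set set)"
  by (rule finite_subset[of _ UNIV]) simp_all

subsection \<open>Orthogonal complements for the standard bilinear form\<close>

definition dotp :: "'a::field ^ 'n::finite \<Rightarrow> 'a ^ 'n \<Rightarrow> 'a" where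
  "dotp u v = (\<Sum>i\<in>UNIV. u$i * v$i)"

definition perp :: "('a::field ^ 'n::finite) set \<Rightarrow> ('a ^ 'n) set" where
  "perp V = {u. \<forall>v\<in>V. dotp v u = 0}"

lemma dotp_add_left: "dotp (v + w) u = dotp v u + dotp w u"
  by (simp add: dotp_def sum.distrib distrib_right)

lemma dotp_scale_left: "dotp (c *s v) u = c * dotp v u"
  by (simp add: dotp_def sum_distrib_left mult.assoc)

lemma dotp_commute: "dotp v u = dotp u v"
  by (simp add: dotp_def mult.commute)

lemma dotp_axis_left: "dotp (axis j 1) u = u $ j"
proof -
  have "dotp (axis j 1) u = (\<Sum>i\<in>UNIV. if i = j then u$i else 0)"
    unfolding dotp_def by (rule sum.cong) (auto simp: axis_def)
  then show ?thesis by simp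
qed

lemma dotp_zero_left [simp]: "dotp 0 u = 0"
  by (simp add: dotp_def)

lemma dotp_zero_right [simp]: "dotp u 0 = 0"
  by (simp add: dotp_def)

lemma dotp_diff_right: "dotp v (u - w) = dotp v u - dotp v w"
  by (simp add: dotp_def sum_subtractf right_diff_distrib)

lemma subspace_dotp_eq_0: "vec.subspace {v. dotp v u = 0}"
  unfolding vec.subspace_def by (auto simp: dotp_add_left dotp_scale_left)

lemma subspace_perp: "vec.subspace (perp V)"
  unfolding vec.subspace_def perp_def
  by (auto simp: dotp_commute[of _ "_ + _"] dotp_commute[of _ "_ *s _"] dotp_add_left dotp_scale_left)
     (auto simp: dotp_commute)

lemma perp_antimono: "A \<subseteq> B \<Longrightarrow> perp B \<subseteq> perp A"
  unfolding perp_def by blast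

lemma subset_perp_perp: "V \<subseteq> perp (perp V)"
  unfolding perp_def by (auto simp: dotp_commute)

definition vanishing_on :: "'n set \<Rightarrow> ('a::zero ^ 'n) set" where
  "vanishing_on J = {w. \<forall>i\<in>J. w$i = 0}"

lemma card_vanishing_on:
  "card (vanishing_on J :: ('a::{zero,finite} ^ 'n::finite) set) = CARD('a) ^ (CARD('n) - card J)"
proof -
  let ?f = "\<lambda>w::'a^'n. restrict (($) w) (- J)"
  have inj: "inj_on ?f (vanishing_on J)"
  proof (rule inj_onI)
    fix v w assume "v \<in> vanishing_on J" "w \<in> vanishing_on J" and eq: "?f v = ?f w"
    have "v $ i = w $ i" for i
      using \<open>v \<in> _\<close> \<open>w \<in> _\<close> fun_cong[OF eq, of i]
      by (cases "i \<in> J") (auto simp: vanishing_on_def)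
    then show "v = w" by (simp add: vec_eq_iff)
  qed
  have img: "?f ` vanishing_on J = (- J) \<rightarrow>\<^sub>E (UNIV::'a set)"
  proof (intro equalityI subsetI)
    fix g assume g: "g \<in> (- J) \<rightarrow>\<^sub>E (UNIV::'a set)"
    let ?w = "(\<chi> i. if i \<in> J then 0 else g i) :: 'a^'n"
    have "?f ?w = g"
      using PiE_arb[OF g] by (auto simp: restrict_def)
    moreover have "?w \<in> vanishing_on J" by (simp add: vanishing_on_def)
    ultimately show "g \<in> ?f ` vanishing_on J" by (rule image_eqI[OF sym])
  qed auto
  have "card (vanishing_on J :: ('a ^ 'n) set) = card ((- J) \<rightarrow>\<^sub>E (UNIV::'a set))"
    using card_image[OF inj] img by simp
  also have "\<dots> = CARD('a) ^ (CARD('n) - card J)"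
    by (simp add: card_PiE Compl_eq_Diff_UNIV card_Diff_subset)
  finally show ?thesis .
qed

lemma obtain_adapted_basis:
  fixes V :: "('a::{field,finite} ^ 'n::finite) set"
  assumes "vec.subspace V"
  obtains \<beta> :: "'n \<Rightarrow> 'a^'n" and I where "inj \<beta>" "vec.independent (range \<beta>)"
    "card I = vec.dim V" "vec.span (\<beta> ` I) = V"
proof -
  obtain B where B: "B \<subseteq> V" "vec.independent B" "V \<subseteq> vec.span B" "card B = vec.dim V"
    by (rule vec.basis_exists)
  obtain B' where B': "B \<subseteq> B'" "vec.independent B'" "UNIV \<subseteq> vec.span B'"
    using B(2) by (rule vec.maximal_independent_subset_extend[of B UNIV, rotated]) auto
  have "card B' = vec.dim (UNIV :: ('a^'n) set)"
    using B' by (intro vec.basis_card_eq_dim) auto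
  then obtain \<beta> where bij: "bij_betw \<beta> (UNIV::'n set) B'"
    using finite_same_card_bij[of "UNIV::'n set" B'] by (auto simp: vec_dim_card card_cart_basis)
  then have inj: "inj \<beta>" and rng: "range \<beta> = B'" by (simp_all add: bij_betw_def)
  have img: "\<beta> ` (\<beta> -` B) = B" using rng B'(1) by auto
  have "card (\<beta> -` B) = card B"
    using card_image[OF inj_on_subset[OF inj, of "\<beta> -` B"]] img by simp
  moreover have "vec.span B = V" using B assms by (simp add: vec.span_subspace)
  ultimately show ?thesis using that[of \<beta> "\<beta> -` B"] inj rng B' B(4) img by simp
qed

lemma inj_dotp_coordinates:
  fixes \<beta> :: "'n::finite \<Rightarrow> 'a::{field,finite} ^ 'n"
  assumes \<beta>: "inj \<beta>" "vec.independent (range \<beta>)"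
  shows "inj (\<lambda>u. \<chi> i. dotp (\<beta> i) u)"
proof -
  define g where "g c = (\<Sum>i\<in>UNIV. c$i *s \<beta> i)" for c :: "'a^'n"
  define m where "m u = (\<chi> i. dotp (\<beta> i) u)" for u :: "'a^'n"
  have "inj g"
  proof (rule injI)
    fix c d assume "g c = g d"
    then have "(\<Sum>v\<in>range \<beta>. (c $ inv \<beta> v - d $ inv \<beta> v) *s v) = 0"
      by (simp add: g_def vec.scale_left_diff_distrib sum_subtractf sum.reindex[OF \<beta>(1)]
          inv_f_f[OF \<beta>(1)])
    then have "\<forall>v\<in>range \<beta>. c $ inv \<beta> v - d $ inv \<beta> v = 0"
      using \<beta>(2) unfolding vec.independent_explicit
      by (auto dest: spec[of _ "\<lambda>v. c $ inv \<beta> v - d $ inv \<beta> v"])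
    then show "c = d" by (simp add: vec_eq_iff inv_f_f[OF \<beta>(1)])
  qed
  then have "surj g" by (simp add: finite_UNIV_inj_surj)
  have adjoint: "dotp (g c) u = dotp c (m u)" for c u
  proof -
    have "dotp (g c) u = (\<Sum>j\<in>UNIV. \<Sum>i\<in>UNIV. c$i * (\<beta> i $ j * u$j))"
      by (simp add: g_def dotp_def sum_component sum_distrib_right mult.assoc)
    also have "\<dots> = dotp c (m u)"
      by (subst sum.swap) (simp add: m_def dotp_def sum_distrib_left)
    finally show ?thesis .
  qed
  show ?thesis
  proof (rule injI)
    fix u u' assume "(\<chi> i. dotp (\<beta> i) u) = (\<chi> i. dotp (\<beta> i) u')"
    then have "dotp (g c) (u - u') = 0" for c
      by (simp add: dotp_diff_right adjoint m_def)
    then have "dotp w (u - u') = 0" for w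
      using \<open>surj g\<close> by (metis surjD)
    then show "u = u'"
      by (metis dotp_axis_left eq_iff_diff_eq_0 vec_eq_iff zero_index)
  qed
qed

lemma card_perp:
  fixes V :: "('a::{field,finite} ^ 'n::finite) set"
  assumes "vec.subspace V"
  shows "card (perp V) = CARD('a) ^ (CARD('n) - vec.dim V)"
proof -
  obtain \<beta> :: "'n \<Rightarrow> 'a^'n" and I where \<beta>: "inj \<beta>" "vec.independent (range \<beta>)"
    "card I = vec.dim V" "vec.span (\<beta> ` I) = V"
    using obtain_adapted_basis[OF assms] by metis
  define m where "m u = (\<chi> i. dotp (\<beta> i) u)" for u :: "'a^'n"
  have "inj m" unfolding m_def by (rule inj_dotp_coordinates[OF \<beta>(1,2)])
  then have "surj m" by (simp add: finite_UNIV_inj_surj)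
  have "u \<in> perp V \<longleftrightarrow> (\<forall>i\<in>I. dotp (\<beta> i) u = 0)" for u
  proof
    assume "\<forall>i\<in>I. dotp (\<beta> i) u = 0"
    then have "vec.span (\<beta> ` I) \<subseteq> {v. dotp v u = 0}"
      by (intro vec.span_minimal[OF _ subspace_dotp_eq_0]) auto
    then show "u \<in> perp V" using \<beta>(4) by (auto simp: perp_def)
  qed (use \<beta>(4) vec.span_superset[of "\<beta> ` I"] in \<open>auto simp: perp_def\<close>)
  then have "perp V = m -` vanishing_on I"
    by (auto simp: vanishing_on_def m_def)
  then have "card (perp V) = card (vanishing_on I :: ('a^'n) set)"
    using card_vimage_inj[OF \<open>inj m\<close>] \<open>surj m\<close> by simp
  then show ?thesis using card_vanishing_on \<beta>(3) by metis
qed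

lemma dim_perp:
  fixes V :: "('a::{field,finite} ^ 'n::finite) set"
  assumes "vec.subspace V"
  shows "vec.dim (perp V) = CARD('n) - vec.dim V"
  by (rule dim_eq_if_card_eq_power[OF subspace_perp card_perp[OF assms]])

lemma perp_perp:
  fixes V :: "('a::{field,finite} ^ 'n::finite) set"
  assumes "vec.subspace V"
  shows "perp (perp V) = V"
proof -
  have "card (perp (perp V)) = card V"
    using card_perp[OF subspace_perp[of V]] dim_perp[OF assms] card_subspace[OF assms]
      dim_subset_UNIV_cart_gen[of V] by simp
  then show ?thesis using card_subset_eq[OF finite subset_perp_perp[of V]] by simp
qed

subsection \<open>Sums of subspaces and covers\<close>

lemma subspace_ssum:
  fixes A :: "('a::field ^ 'n) set"
  shows "vec.subspace A \<Longrightarrow> vec.subspace B \<Longrightarrow> vec.subspace (ssum A B)"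
  unfolding ssum_def by (rule vec.subspace_sums)

lemma ssum_subset: "vec.subspace C \<Longrightarrow> A \<subseteq> C \<Longrightarrow> B \<subseteq> C \<Longrightarrow> ssum A B \<subseteq> C"
  unfolding ssum_def by (auto intro: vec.subspace_add)

lemma subset_ssum_left: "vec.subspace B \<Longrightarrow> A \<subseteq> ssum A B"
  unfolding ssum_def using vec.subspace_0 by force

lemma subset_ssum_right: "vec.subspace A \<Longrightarrow> B \<subseteq> ssum A B"
  unfolding ssum_def using vec.subspace_0 by force

lemma ssum_self: "vec.subspace A \<Longrightarrow> ssum A A = A"
  using ssum_subset[of A A A] subset_ssum_left[of A A] by auto

lemma dim_ssum_inter:
  fixes A :: "('a::field ^ 'n::finite) set"
  shows "vec.subspace A \<Longrightarrow> vec.subspace B \<Longrightarrow>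
    vec.dim (ssum A B) + vec.dim (A \<inter> B) = vec.dim A + vec.dim B"
  unfolding ssum_def by (rule vec.dim_sums_Int)

lemma dim_strict_mono:
  fixes A :: "('a::field ^ 'n::finite) set"
  assumes "vec.subspace A" "vec.subspace B" "A \<subset> B"
  shows "vec.dim A < vec.dim B"
  using vec.dim_psubset[of A B] assms by (simp add: vec.span_eq_iff[THEN iffD2])

lemma dim_span_insert_notin:
  fixes x :: "('a::field ^ 'n::finite) set"
  assumes "vec.subspace x" "v \<notin> x"
  shows "vec.dim (vec.span (insert v x)) = vec.dim x + 1"
  using assms by (simp add: vec.span_eq_iff[THEN iffD2] vec.dim_insert)

lemma covered_span_insert:
  fixes x :: "('a::field ^ 'n::finite) set"
  assumes "vec.subspace x" "v \<notin> x"
  shows "covered x (vec.span (insert v x))"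
  unfolding covered_def using dim_span_insert_notin[OF assms] assms(1)
  by (auto intro: vec.span_base)

lemma covered_eq_span_insert:
  fixes x :: "('a::field ^ 'n::finite) set"
  assumes "covered x y" "v \<in> y" "v \<notin> x"
  shows "y = vec.span (insert v x)"
proof -
  have "vec.subspace x" "vec.subspace y" "x \<subseteq> y" "vec.dim x + 1 = vec.dim y"
    using assms(1) unfolding covered_def by auto
  moreover have "vec.span (insert v x) \<subseteq> y"
    using assms(2) \<open>x \<subseteq> y\<close> \<open>vec.subspace y\<close> by (intro vec.span_minimal) auto
  ultimately show ?thesis
    using vec.subspace_dim_equal[OF vec.subspace_span] dim_span_insert_notin[OF _ assms(3)]
    by (metis order_refl)
qed

lemma card_covered:
  fixes x :: "('a::{field,finite} ^ 'n::finite) set"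
  assumes "covered x y"
  shows "card y = CARD('a) * card x"
proof -
  have "vec.subspace x" "vec.subspace y" "vec.dim y = Suc (vec.dim x)"
    using assms unfolding covered_def by auto
  then show ?thesis using card_subspace[of x] card_subspace[of y] by simp
qed

lemma card_covers_within_mult:
  fixes x :: "('a::{field,finite} ^ 'n::finite) set"
  assumes "vec.subspace x" "vec.subspace P" "x \<subseteq> P"
  shows "card {y\<in>Lsp. covered x y \<and> y \<subseteq> P} * (card x * (CARD('a) - 1)) = card P - card x"
proof -
  define Y where "Y = {y\<in>Lsp. covered x y \<and> y \<subseteq> P}"
  have U: "P - x = (\<Union>y\<in>Y. y - x)"
  proof (intro equalityI subsetI)
    fix v assume v: "v \<in> P - x"
    let ?y = "vec.span (insert v x)"
    have "?y \<subseteq> P" using v assms(2,3) by (intro vec.span_minimal) auto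
    then have "?y \<in> Y" unfolding Y_def Lsp_def using covered_span_insert[OF assms(1)] v by auto
    moreover have "v \<in> ?y - x" using v by (auto intro: vec.span_base)
    ultimately show "v \<in> (\<Union>y\<in>Y. y - x)" by blast
  qed (auto simp: Y_def)
  \<comment> \<open>a vector outside x lies in exactly one cover of x, namely the span of it and x\<close>
  have disjoint: "(y1 - x) \<inter> (y2 - x) = {}" if "y1 \<in> Y" "y2 \<in> Y" "y1 \<noteq> y2" for y1 y2
    using that covered_eq_span_insert unfolding Y_def by blast
  have card_diff: "card (y - x) = card x * (CARD('a) - 1)" if "y \<in> Y" for y
    using that card_covered[of x y] card_Diff_subset[of x y]
    unfolding Y_def covered_def by (simp add: diff_mult_distrib2 mult.commute)
  have "card (P - x) = (\<Sum>y\<in>Y. card (y - x))"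
    unfolding U by (rule card_UN_disjoint) (use disjoint in auto)
  also have "\<dots> = card Y * (card x * (CARD('a) - 1))"
    using card_diff by simp
  finally show ?thesis using assms(3) by (simp add: Y_def card_Diff_subset)
qed

lemma card_covers_within:
  fixes x :: "('a::{field,finite} ^ 'n::finite) set"
  assumes "vec.subspace x" "vec.subspace P" "x \<subseteq> P"
  shows "real (card {y\<in>Lsp. covered x y \<and> y \<subseteq> P}) * (real CARD('a) - 1)
     = real CARD('a) ^ (vec.dim P - vec.dim x) - 1"
proof -
  let ?Y = "{y\<in>Lsp. covered x y \<and> y \<subseteq> P}" and ?Q = "real CARD('a)"
  have "vec.dim x \<le> vec.dim P" using assms(3) by (rule vec.dim_subset)
  then have cP: "real (card P) = ?Q ^ vec.dim x * ?Q ^ (vec.dim P - vec.dim x)"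
    using card_subspace[OF assms(2)] by (simp flip: power_add)
  have cx: "real (card x) = ?Q ^ vec.dim x"
    using card_subspace[OF assms(1)] by simp
  have "card x \<le> card P" using assms(3) by (simp add: card_mono)
  then have "real (card ?Y) * (real (card x) * (?Q - 1)) = real (card P) - real (card x)"
    using arg_cong[OF card_covers_within_mult[OF assms], of real] one_less_card_field[where 'a='a]
    by (simp add: of_nat_diff)
  then have "?Q ^ vec.dim x * (real (card ?Y) * (?Q - 1)) = ?Q ^ vec.dim x * (?Q ^ (vec.dim P - vec.dim x) - 1)"
    unfolding cP cx by (simp add: algebra_simps)
  then show ?thesis by simp
qed

lemma common_upper_cover_eq:
  fixes x :: "('a::field ^ 'n::finite) set"
  assumes xy: "covered x y" and zy: "covered z y" and "z \<noteq> x"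
  shows "y = ssum x z"
proof -
  have sx: "vec.subspace x" and sz: "vec.subspace z" and sy: "vec.subspace y"
    and "x \<subseteq> y" "z \<subseteq> y" and dx: "vec.dim x + 1 = vec.dim y" and dz: "vec.dim z + 1 = vec.dim y"
    using xy zy unfolding covered_def by auto
  have sxz: "vec.subspace (ssum x z)" using sx sz by (rule subspace_ssum)
  have sub: "ssum x z \<subseteq> y" using sy \<open>x \<subseteq> y\<close> \<open>z \<subseteq> y\<close> by (rule ssum_subset)
  have "\<not> ssum x z \<subseteq> x"
  proof
    assume "ssum x z \<subseteq> x"
    then have "z \<subseteq> x" using subset_ssum_right[OF sx] by blast
    then show False using vec.subspace_dim_equal[OF sz sx] dx dz \<open>z \<noteq> x\<close> by simp
  qed
  then have "vec.dim x < vec.dim (ssum x z)"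
    using dim_strict_mono[OF sx sxz] subset_ssum_left[OF sz, of x] by blast
  moreover have "vec.dim (ssum x z) \<le> vec.dim y" using sub by (rule vec.dim_subset)
  ultimately show ?thesis using vec.subspace_dim_equal[OF sxz sy sub] dx by simp
qed

lemma common_lower_cover_eq:
  fixes x :: "('a::field ^ 'n::finite) set"
  assumes yx: "covered y x" and yz: "covered y z" and "z \<noteq> x"
  shows "y = x \<inter> z"
proof -
  have sx: "vec.subspace x" and sz: "vec.subspace z" and sy: "vec.subspace y"
    and "y \<subseteq> x" "y \<subseteq> z" and dx: "vec.dim y + 1 = vec.dim x" and dz: "vec.dim y + 1 = vec.dim z"
    using yx yz unfolding covered_def by auto
  have sxz: "vec.subspace (x \<inter> z)" using sx sz by (rule vec.subspace_inter)
  have sub: "y \<subseteq> x \<inter> z" using \<open>y \<subseteq> x\<close> \<open>y \<subseteq> z\<close> by blast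
  have "\<not> x \<subseteq> x \<inter> z"
  proof
    assume "x \<subseteq> x \<inter> z"
    then have "x \<subseteq> z" by blast
    then show False using vec.subspace_dim_equal[OF sx sz] dx dz \<open>z \<noteq> x\<close> by simp
  qed
  then have "vec.dim (x \<inter> z) < vec.dim x"
    using dim_strict_mono[OF sxz sx] by blast
  moreover have "vec.dim y \<le> vec.dim (x \<inter> z)" using sub by (rule vec.dim_subset)
  ultimately show ?thesis using vec.subspace_dim_equal[OF sy sxz sub] dx by simp
qed

lemma covered_ssum_iff_covered_inter:
  fixes x :: "('a::field ^ 'n::finite) set"
  assumes "vec.subspace x" "vec.subspace z"
  shows "covered x (ssum x z) \<and> covered z (ssum x z) \<longleftrightarrow> covered (x \<inter> z) x \<and> covered (x \<inter> z) z"
  using dim_ssum_inter[OF assms] assms subspace_ssum[OF assms] vec.subspace_inter[OF assms]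
    subset_ssum_left[OF assms(2)] subset_ssum_right[OF assms(1)]
  unfolding covered_def by auto

lemma dim_inter_growth:
  fixes x :: "('a::field ^ 'n::finite) set"
  assumes sx: "vec.subspace x" and sz: "vec.subspace z" and s0: "vec.subspace x0"
  shows "vec.dim x + vec.dim (ssum x z \<inter> x0) \<le> vec.dim (ssum x z) + vec.dim (x \<inter> x0)"
    and "vec.dim x + vec.dim (ssum x z \<inter> x0) = vec.dim (ssum x z) + vec.dim (x \<inter> x0)
      \<longleftrightarrow> ssum x z \<subseteq> ssum x x0"
proof -
  define S where "S = ssum x x0"
  define U where "U = ssum (ssum x z) x0"
  have sxz: "vec.subspace (ssum x z)" using sx sz by (rule subspace_ssum)
  have sS: "vec.subspace S" and sU: "vec.subspace U"
    unfolding S_def U_def using sx sxz s0 by (simp_all add: subspace_ssum)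
  have dim_S: "vec.dim S + vec.dim (x \<inter> x0) = vec.dim x + vec.dim x0"
    unfolding S_def by (rule dim_ssum_inter[OF sx s0])
  have dim_U: "vec.dim U + vec.dim (ssum x z \<inter> x0) = vec.dim (ssum x z) + vec.dim x0"
    unfolding U_def by (rule dim_ssum_inter[OF sxz s0])
  have xz_U: "ssum x z \<subseteq> U" and x0_U: "x0 \<subseteq> U" and x0_S: "x0 \<subseteq> S"
    unfolding S_def U_def using sx sxz s0 by (simp_all add: subset_ssum_left subset_ssum_right)
  have "x \<subseteq> U" using subset_ssum_left[OF sz, of x] xz_U by blast
  then have "S \<subseteq> U" unfolding S_def by (rule ssum_subset[OF sU _ x0_U])
  then have "vec.dim S \<le> vec.dim U" by (rule vec.dim_subset)
  then show "vec.dim x + vec.dim (ssum x z \<inter> x0) \<le> vec.dim (ssum x z) + vec.dim (x \<inter> x0)"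
    using dim_S dim_U by linarith
  have "ssum x z \<subseteq> S \<longleftrightarrow> U = S"
    using ssum_subset[OF sS _ x0_S, of "ssum x z"] xz_U \<open>S \<subseteq> U\<close> unfolding U_def by blast
  also have "\<dots> \<longleftrightarrow> vec.dim U = vec.dim S"
    using vec.subspace_dim_equal[OF sS sU \<open>S \<subseteq> U\<close>] by auto
  finally show "vec.dim x + vec.dim (ssum x z \<inter> x0) = vec.dim (ssum x z) + vec.dim (x \<inter> x0)
      \<longleftrightarrow> ssum x z \<subseteq> ssum x x0"
    using dim_S dim_U unfolding S_def by linarith
qed

lemma covered_inter_eq_iff_not_subset_ssum:
  fixes x :: "('a::field ^ 'n::finite) set"
  assumes c: "covered x y" and s0: "vec.subspace x0"
  shows "y \<inter> x0 = x \<inter> x0 \<longleftrightarrow> \<not> y \<subseteq> ssum x x0"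
proof
  have sx: "vec.subspace x" and sy: "vec.subspace y" and "x \<subseteq> y"
    using c unfolding covered_def by auto
  assume h: "y \<inter> x0 = x \<inter> x0"
  show "\<not> y \<subseteq> ssum x x0"
  proof
    assume "y \<subseteq> ssum x x0"
    have "y \<noteq> x" using c unfolding covered_def by auto
    then obtain v where v: "v \<in> y" "v \<notin> x" using \<open>x \<subseteq> y\<close> by blast
    then obtain a b where ab: "a \<in> x" "b \<in> x0" "v = a + b"
      using \<open>y \<subseteq> ssum x x0\<close> unfolding ssum_def by blast
    then have "b \<in> y" using v \<open>x \<subseteq> y\<close> vec.subspace_diff[OF sy, of v a] by (auto simp: algebra_simps)
    then have "b \<in> x" using h ab by blast
    then show False using v ab vec.subspace_add[OF sx] by blast
  qed
next
  assume h: "\<not> y \<subseteq> ssum x x0"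
  show "y \<inter> x0 = x \<inter> x0"
  proof (rule ccontr)
    assume "y \<inter> x0 \<noteq> x \<inter> x0"
    moreover have "x \<inter> x0 \<subseteq> y \<inter> x0" using c unfolding covered_def by auto
    ultimately obtain b where b: "b \<in> y" "b \<in> x0" "b \<notin> x" by blast
    have "y = vec.span (insert b x)" by (rule covered_eq_span_insert[OF c b(1,3)])
    also have "\<dots> \<subseteq> ssum x x0"
      using b(2) c subset_ssum_left[OF s0, of x] subset_ssum_right[of x x0]
        subspace_ssum[of x x0] s0
      unfolding covered_def by (intro vec.span_minimal) auto
    finally show False using h by simp
  qed
qed

lemma card_upper_covers_meeting:
  fixes x :: "('a::{field,finite} ^ 'n::finite) set"
  assumes sx: "vec.subspace x" and s0: "vec.subspace x0"
  shows "real (card {y\<in>Lsp. covered x y \<and> y \<inter> x0 = x \<inter> x0}) * (real CARD('a) - 1)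
    = real CARD('a) ^ (CARD('n) - vec.dim x) - real CARD('a) ^ (vec.dim x0 - vec.dim (x \<inter> x0))"
proof -
  define Y where "Y = {y\<in>Lsp. covered x y \<and> y \<subseteq> UNIV}"
  define Y' where "Y' = {y\<in>Lsp. covered x y \<and> y \<subseteq> ssum x x0}"
  have "Y' \<subseteq> Y" "finite Y" unfolding Y_def Y'_def by (auto intro: finite_subset[OF _ finite_Lsp])
  have "{y\<in>Lsp. covered x y \<and> y \<inter> x0 = x \<inter> x0} = Y - Y'"
    using covered_inter_eq_iff_not_subset_ssum[OF _ s0] unfolding Y_def Y'_def by auto
  then have "real (card {y\<in>Lsp. covered x y \<and> y \<inter> x0 = x \<inter> x0}) = real (card Y) - real (card Y')"
    using card_Diff_subset[OF finite_subset[OF \<open>Y' \<subseteq> Y\<close>] \<open>Y' \<subseteq> Y\<close>] card_mono[of Y Y']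
      \<open>Y' \<subseteq> Y\<close> \<open>finite Y\<close> by (simp add: of_nat_diff)
  moreover have "real (card Y) * (real CARD('a) - 1) = real CARD('a) ^ (CARD('n) - vec.dim x) - 1"
    using card_covers_within[OF sx vec.subspace_UNIV subset_UNIV] unfolding Y_def vec_dim_card .
  moreover have "vec.dim (ssum x x0) - vec.dim x = vec.dim x0 - vec.dim (x \<inter> x0)"
    using dim_ssum_inter[OF sx s0] by simp
  then have "real (card Y') * (real CARD('a) - 1) = real CARD('a) ^ (vec.dim x0 - vec.dim (x \<inter> x0)) - 1"
    using card_covers_within[OF sx subspace_ssum[OF sx s0] subset_ssum_left[OF s0]]
    unfolding Y'_def by simp
  ultimately show ?thesis by (simp add: left_diff_distrib)
qed

lemma perp_bij_betw_lower_upper_covers: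
  fixes x :: "('a::{field,finite} ^ 'n::finite) set"
  assumes sx: "vec.subspace x" and sW: "vec.subspace W"
  shows "bij_betw perp {y\<in>Lsp. covered y x \<and> W \<subseteq> y} {G\<in>Lsp. covered (perp x) G \<and> G \<subseteq> perp W}"
proof (rule bij_betw_byWitness[where f' = perp])
  have dims: "vec.dim (perp x) + 1 = vec.dim (perp y) \<longleftrightarrow> vec.dim y + 1 = vec.dim x"
    if "vec.subspace y" for y :: "('a ^ 'n) set"
    using dim_perp[OF that] dim_perp[OF sx] dim_subset_UNIV_cart_gen[of x] dim_subset_UNIV_cart_gen[of y]
    by auto
  show "perp ` {y\<in>Lsp. covered y x \<and> W \<subseteq> y} \<subseteq> {G\<in>Lsp. covered (perp x) G \<and> G \<subseteq> perp W}"
  proof (intro image_subsetI CollectI conjI)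
    fix y assume "y \<in> {y\<in>Lsp. covered y x \<and> W \<subseteq> y}"
    then have "vec.subspace y" "y \<subseteq> x" "W \<subseteq> y" "vec.dim y + 1 = vec.dim x"
      unfolding covered_def Lsp_def by auto
    then show "covered (perp x) (perp y)" "perp y \<subseteq> perp W"
      using dims subspace_perp perp_antimono[of y x] perp_antimono[of W y] unfolding covered_def by auto
  qed (simp add: Lsp_def subspace_perp)
  show "perp ` {G\<in>Lsp. covered (perp x) G \<and> G \<subseteq> perp W} \<subseteq> {y\<in>Lsp. covered y x \<and> W \<subseteq> y}"
  proof (intro image_subsetI CollectI conjI)
    fix G assume "G \<in> {G\<in>Lsp. covered (perp x) G \<and> G \<subseteq> perp W}"
    then have sG: "vec.subspace G" and "perp x \<subseteq> G" "G \<subseteq> perp W"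
      and "vec.dim (perp x) + 1 = vec.dim G" unfolding covered_def Lsp_def by auto
    then show "covered (perp G) x" "W \<subseteq> perp G"
      using dims[OF subspace_perp] subspace_perp perp_antimono perp_perp[OF sG] perp_perp[OF sx]
        perp_perp[OF sW] sx unfolding covered_def by metis+
  qed (simp add: Lsp_def subspace_perp)
qed (auto simp: Lsp_def covered_def perp_perp)

lemma card_lower_covers_containing:
  fixes x :: "('a::{field,finite} ^ 'n::finite) set"
  assumes sx: "vec.subspace x" and sW: "vec.subspace W" and "W \<subseteq> x"
  shows "real (card {y\<in>Lsp. covered y x \<and> W \<subseteq> y}) * (real CARD('a) - 1)
    = real CARD('a) ^ (vec.dim x - vec.dim W) - 1"
proof -
  have "(CARD('n) - vec.dim W) - (CARD('n) - vec.dim x) = vec.dim x - vec.dim W"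
    using dim_subset_UNIV_cart_gen[of x] vec.dim_subset[OF \<open>W \<subseteq> x\<close>] by simp
  then show ?thesis
    using bij_betw_same_card[OF perp_bij_betw_lower_upper_covers[OF sx sW]]
      card_covers_within[OF subspace_perp subspace_perp perp_antimono[OF \<open>W \<subseteq> x\<close>]]
    by (simp add: dim_perp[OF sx] dim_perp[OF sW])
qed

subsection \<open>Complementary subspaces and the maps tau\<close>

definition complementary :: "('a::field ^ 'n) set \<Rightarrow> ('a ^ 'n) set \<Rightarrow> bool" where
  "complementary x0 x1 \<longleftrightarrow> vec.subspace x0 \<and> vec.subspace x1 \<and> x0 \<inter> x1 = {0} \<and> ssum x0 x1 = UNIV"

lemma proj0_unique:
  assumes d: "complementary x0 x1" and a: "a \<in> x0" "u - a \<in> x1" and b: "b \<in> x0" "u - b \<in> x1"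
  shows "a = b"
proof -
  have s0: "vec.subspace x0" and s1: "vec.subspace x1" and i: "x0 \<inter> x1 = {0}"
    using d unfolding complementary_def by auto
  have "a - b \<in> x0" using a b s0 by (simp add: vec.subspace_diff)
  moreover have "a - b = (u - b) - (u - a)" by simp
  then have "a - b \<in> x1" using a b s1 by (metis vec.subspace_diff)
  ultimately have "a - b \<in> {0}" using i by blast
  then show ?thesis by simp
qed

lemma proj0_mem:
  assumes d: "complementary x0 x1"
  shows "proj0 x0 x1 u \<in> x0 \<and> u - proj0 x0 x1 u \<in> x1"
proof -
  have "u \<in> ssum x0 x1" using d unfolding complementary_def by simp
  then obtain a b where ab: "u = a + b" "a \<in> x0" "b \<in> x1" unfolding ssum_def by blast
  have ex: "a \<in> x0 \<and> u - a \<in> x1" using ab by simp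
  show ?thesis unfolding proj0_def
    by (rule theI[of _ a]) (use ex proj0_unique[OF d] in blast)+
qed

lemma proj0_eq:
  assumes d: "complementary x0 x1" and "a \<in> x0" "u - a \<in> x1"
  shows "proj0 x0 x1 u = a"
  using proj0_unique[OF d _ _ assms(2,3)] proj0_mem[OF d, of u] by blast

lemma mem_coset_iff: "y \<in> coset u W \<longleftrightarrow> y - u \<in> W"
  unfolding coset_def by (auto simp: image_iff) (metis add.commute diff_add_cancel)

lemma coset_eq_iff:
  fixes W :: "('a::field ^ 'n) set"
  assumes "vec.subspace W"
  shows "coset u W = coset v W \<longleftrightarrow> u - v \<in> W"
proof
  assume "coset u W = coset v W"
  then show "u - v \<in> W"
    using mem_coset_iff[of u u W] mem_coset_iff[of u v W] vec.subspace_0[OF assms] by simp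
next
  assume uv: "u - v \<in> W"
  have "y - u \<in> W \<longleftrightarrow> y - v \<in> W" for y
    using vec.subspace_add[OF assms _ uv, of "y - u"] vec.subspace_diff[OF assms _ uv, of "y - v"]
    by auto
  then show "coset u W = coset v W" by (auto simp: mem_coset_iff)
qed

lemma set_diff_cosets:
  fixes W :: "('a::field ^ 'n) set"
  assumes "vec.subspace W"
  shows "{a - b | a b. a \<in> coset p W \<and> b \<in> coset r W} = coset (p - r) W"
proof (intro equalityI subsetI)
  fix y assume "y \<in> {a - b | a b. a \<in> coset p W \<and> b \<in> coset r W}"
  then obtain a b where "y = a - b" "a - p \<in> W" "b - r \<in> W"
    by (auto simp: mem_coset_iff)
  moreover have "y - (p - r) = (a - p) - (b - r)" using \<open>y = a - b\<close> by simp
  ultimately show "y \<in> coset (p - r) W"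
    using vec.subspace_diff[OF assms] unfolding mem_coset_iff by metis
next
  fix y assume "y \<in> coset (p - r) W"
  then have "y + r \<in> coset p W" "r \<in> coset r W" "y = (y + r) - r"
    using vec.subspace_0[OF assms] by (simp_all add: mem_coset_iff algebra_simps)
  then show "y \<in> {a - b | a b. a \<in> coset p W \<and> b \<in> coset r W}" by blast
qed

lemma tau_diff_on_coset:
  fixes x z :: "('a::field ^ 'n) set"
  assumes d: "complementary x0 x1" and sx: "vec.subspace x"
    and hs: "ssum z x0 = ssum x x0" and hi: "z \<inter> x0 = x \<inter> x0"
    and u0: "u0 \<in> x"
  shows "\<exists>ux vz. ux \<in> x \<and> vz \<in> z \<and> vz - ux \<in> x0 \<and> ux - u0 \<in> x0 \<and> vz - u0 \<in> x0 \<and>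
     {a - b | a b. a \<in> tau x0 x1 z (coset u0 x0) \<and> b \<in> tau x0 x1 x (coset u0 x0)} = coset (vz - ux) (x \<inter> x0)"
proof -
  have s0: "vec.subspace x0" using d unfolding complementary_def by simp
  let ?C = "coset u0 x0"
  define ux where "ux = (SOME u. u \<in> x \<and> coset u x0 = ?C)"
  define vz where "vz = (SOME u. u \<in> z \<and> coset u x0 = ?C)"
  have ux: "ux \<in> x \<and> coset ux x0 = ?C" unfolding ux_def by (rule someI[of _ u0]) (simp add: u0)
  have "u0 \<in> ssum x x0" using u0 vec.subspace_0[OF s0] unfolding ssum_def by force
  then have "u0 \<in> ssum z x0" using hs by simp
  then obtain v b where vb: "v \<in> z" "b \<in> x0" "u0 = v + b" unfolding ssum_def by blast
  have "coset v x0 = ?C" using coset_eq_iff[OF s0] vb s0 by (simp add: vec.subspace_neg)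
  then have "v \<in> z \<and> coset v x0 = ?C" using vb(1) by simp
  then have vz: "vz \<in> z \<and> coset vz x0 = ?C" unfolding vz_def by (rule someI[where P="\<lambda>u. u \<in> z \<and> coset u x0 = ?C"])
  have e1: "ux - u0 \<in> x0" using ux coset_eq_iff[OF s0] by blast
  have e2: "vz - u0 \<in> x0" using vz coset_eq_iff[OF s0] by blast
  have e3: "vz - ux \<in> x0" using ux vz coset_eq_iff[OF s0] by metis
  have sW: "vec.subspace (x \<inter> x0)" using sx s0 by (rule vec.subspace_inter)
  have t1: "tau x0 x1 x ?C = coset (proj0 x0 x1 ux) (x \<inter> x0)"
    unfolding tau_def ux_def ..
  have t2: "tau x0 x1 z ?C = coset (proj0 x0 x1 vz) (x \<inter> x0)"
    unfolding tau_def vz_def hi ..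
  have pp: "proj0 x0 x1 vz = proj0 x0 x1 ux + (vz - ux)"
  proof (rule proj0_eq[OF d])
    show "proj0 x0 x1 ux + (vz - ux) \<in> x0"
      using proj0_mem[OF d, of ux] e3 s0 by (simp add: vec.subspace_add)
    have "vz - (proj0 x0 x1 ux + (vz - ux)) = ux - proj0 x0 x1 ux" by simp
    then show "vz - (proj0 x0 x1 ux + (vz - ux)) \<in> x1" using proj0_mem[OF d, of ux] by simp
  qed
  have "{a - b | a b. a \<in> tau x0 x1 z ?C \<and> b \<in> tau x0 x1 x ?C} = coset (vz - ux) (x \<inter> x0)"
    unfolding t1 t2 set_diff_cosets[OF sW] pp by simp
  then show ?thesis using ux vz e1 e2 e3 by blast
qed

lemma union_tau_diff_eq:
  fixes x z :: "('a::field ^ 'n) set"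
  assumes d: "complementary x0 x1" and sx: "vec.subspace x" and sz: "vec.subspace z"
    and hs: "ssum z x0 = ssum x x0" and hi: "z \<inter> x0 = x \<inter> x0"
  shows "\<Union> ((\<lambda>C. {a - b | a b. a \<in> tau x0 x1 z C \<and> b \<in> tau x0 x1 x C}) ` {coset u x0 | u. u \<in> x})
    = ssum x z \<inter> x0"
proof -
  have s0: "vec.subspace x0" using d unfolding complementary_def by simp
  have sW: "vec.subspace (x \<inter> x0)" using sx s0 by (rule vec.subspace_inter)
  let ?dom = "{coset u x0 | u. u \<in> x}"
  let ?dif = "\<lambda>C. {a - b | a b. a \<in> tau x0 x1 z C \<and> b \<in> tau x0 x1 x C}"
  show ?thesis
  proof
    show "\<Union> (?dif ` ?dom) \<subseteq> ssum x z \<inter> x0"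
    proof
      fix y assume "y \<in> \<Union> (?dif ` ?dom)"
      then obtain u0 where u0: "u0 \<in> x" and y: "y \<in> ?dif (coset u0 x0)" by blast
      obtain ux vz where c: "ux \<in> x" "vz \<in> z" "vz - ux \<in> x0"
        "?dif (coset u0 x0) = coset (vz - ux) (x \<inter> x0)"
        using tau_diff_on_coset[OF d sx hs hi u0] by blast
      obtain w where w: "w \<in> x \<inter> x0" "y = (vz - ux) + w" using y c(4) unfolding coset_def by auto
      have "y \<in> x0" using w c(3) s0 by (simp add: vec.subspace_add)
      moreover have "w - ux \<in> x" using w c(1) sx by (simp add: vec.subspace_diff)
      moreover have "y = (w - ux) + vz" using w by simp
      ultimately show "y \<in> ssum x z \<inter> x0" using c(2) unfolding ssum_def by blast
    qed
  next
    show "ssum x z \<inter> x0 \<subseteq> \<Union> (?dif ` ?dom)"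
    proof
      fix t assume t: "t \<in> ssum x z \<inter> x0"
      then obtain a b where ab: "a \<in> x" "b \<in> z" "t = a + b" "t \<in> x0" unfolding ssum_def by blast
      have ma: "- a \<in> x" using ab sx by (simp add: vec.subspace_neg)
      obtain ux vz where c: "ux \<in> x" "vz \<in> z" "vz - ux \<in> x0" "ux - - a \<in> x0" "vz - - a \<in> x0"
        "?dif (coset (- a) x0) = coset (vz - ux) (x \<inter> x0)"
        using tau_diff_on_coset[OF d sx hs hi ma] by blast
      have w1: "b - vz \<in> x \<inter> x0"
      proof -
        have "b - vz \<in> z" using ab c sz by (simp add: vec.subspace_diff)
        moreover have "b - vz = t - (vz - - a)" using ab by simp
        then have "b - vz \<in> x0" using ab(4) c(5) s0 by (metis vec.subspace_diff)
        ultimately show ?thesis using hi by blast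
      qed
      have w2: "ux - - a \<in> x \<inter> x0"
        using c(1,4) ma sx vec.subspace_diff[OF sx c(1) ma] by simp
      have "(b - vz) + (ux - - a) \<in> x \<inter> x0" by (rule vec.subspace_add[OF sW w1 w2])
      moreover have "t = (vz - ux) + ((b - vz) + (ux - - a))" using ab by simp
      ultimately have "t \<in> ?dif (coset (- a) x0)" using c(6) unfolding coset_def by blast
      moreover have "coset (- a) x0 \<in> ?dom" using ma by blast
      ultimately show "t \<in> \<Union> (?dif ` ?dom)" by blast
    qed
  qed
qed

lemma tau_diff_rank_eq_dim:
  fixes x z :: "('a::field ^ 'n) set"
  assumes "complementary x0 x1" "vec.subspace x" "vec.subspace z"
    and "ssum z x0 = ssum x x0" "z \<inter> x0 = x \<inter> x0"
  shows "tau_diff_rank x0 x1 z x = vec.dim (ssum x z \<inter> x0) - vec.dim (x \<inter> x0)"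
  unfolding tau_diff_rank_def Let_def union_tau_diff_eq[OF assms] ..

lemma D3_condition_iff:
  fixes x z :: "('a::field ^ 'n::finite) set"
  assumes d: "complementary x0 x1" and sx: "vec.subspace x" and sz: "vec.subspace z"
  shows "(vec.subspace z \<and> ssum z x0 = ssum x x0 \<and> z \<inter> x0 = x \<inter> x0 \<and> tau_diff_rank x0 x1 z x = 1)
     \<longleftrightarrow> covered (x \<inter> z) x \<and> covered (x \<inter> z) z \<and> z \<inter> x0 = x \<inter> x0 \<and> ssum x z \<inter> x0 \<noteq> x \<inter> x0"
    (is "?tau \<longleftrightarrow> ?covers")
proof -
  have s0: "vec.subspace x0" using d unfolding complementary_def by simp
  define S where "S = ssum x x0"
  define T where "T = ssum x z \<inter> x0"
  define W where "W = x \<inter> x0"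
  have sS: "vec.subspace S" using sx s0 unfolding S_def by (rule subspace_ssum)
  have dim_S: "vec.dim S + vec.dim W = vec.dim x + vec.dim x0"
    unfolding S_def W_def by (rule dim_ssum_inter[OF sx s0])
  have dim_z0: "vec.dim (ssum z x0) + vec.dim (z \<inter> x0) = vec.dim z + vec.dim x0"
    by (rule dim_ssum_inter[OF sz s0])
  have "W \<subseteq> T" unfolding W_def T_def using subset_ssum_left[OF sz, of x] by blast
  note growth = dim_inter_growth[OF sx sz s0, folded S_def T_def W_def]
  have covered_iff: "covered (x \<inter> z) x \<and> covered (x \<inter> z) z \<longleftrightarrow>
      vec.dim z = vec.dim x \<and> vec.dim (ssum x z) = vec.dim x + 1"
    using dim_ssum_inter[OF sx sz] sx sz vec.subspace_inter[OF sx sz] unfolding covered_def by auto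
  show ?thesis
  proof
    assume ?tau
    then have z0: "ssum z x0 = S" and zW: "z \<inter> x0 = W" and rank: "vec.dim T = vec.dim W + 1"
      using tau_diff_rank_eq_dim[OF d sx sz] unfolding S_def T_def W_def by auto
    have "vec.dim z = vec.dim x" using dim_S dim_z0 z0 zW by simp
    moreover have "ssum x z \<subseteq> S"
      using subset_ssum_left[OF s0, of z] ssum_subset[OF sS, of x z] subset_ssum_left[OF s0, of x]
      unfolding z0 S_def by blast
    then have "vec.dim (ssum x z) = vec.dim x + 1" using growth(2) rank by simp
    ultimately show ?covers using covered_iff zW rank unfolding T_def W_def by auto
  next
    assume ?covers
    then have dz: "vec.dim z = vec.dim x" and dxz: "vec.dim (ssum x z) = vec.dim x + 1"
      and zW: "z \<inter> x0 = W" and "W \<noteq> T"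
      using covered_iff unfolding T_def W_def by blast+
    then have "vec.dim W < vec.dim T"
      using dim_strict_mono[OF _ _ psubsetI[OF \<open>W \<subseteq> T\<close>]] vec.subspace_inter sx sz s0 subspace_ssum
      unfolding T_def W_def by metis
    then have rank: "vec.dim T = vec.dim W + 1" using growth(1) dxz by linarith
    then have "ssum x z \<subseteq> S" using growth(2) dxz by simp
    then have "z \<subseteq> S" using subset_ssum_right[OF sx, of z] by blast
    moreover have "x0 \<subseteq> S" unfolding S_def by (rule subset_ssum_right[OF sx])
    ultimately have "ssum z x0 \<subseteq> S" by (rule ssum_subset[OF sS])
    moreover have "vec.dim (ssum z x0) = vec.dim S" using dim_S dim_z0 zW dz by simp
    ultimately have "ssum z x0 = S"
      using vec.subspace_dim_equal[OF subspace_ssum[OF sz s0] sS] by simp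
    then show ?tau
      using tau_diff_rank_eq_dim[OF d sx sz] sz zW rank unfolding S_def T_def W_def by simp
  qed
qed

subsection \<open>Matrix entries of the commutator\<close>

lemma card_eq_if_subset_singleton: "A \<subseteq> {a} \<Longrightarrow> card A = (if a \<in> A then 1 else 0)"
  by (auto simp: subset_singleton_iff)

lemma opcomp_L1_R1:
  fixes x0 :: "('a::{field,finite} ^ 'n::finite) set"
  shows "opcomp (L1 x0) (R1 x0) x z =
    of_nat (card {y\<in>Lsp. covered x y \<and> covered z y \<and> y \<inter> x0 = x \<inter> x0 \<and> z \<inter> x0 = x \<inter> x0})"
proof -
  have "opcomp (L1 x0) (R1 x0) x z =
      (\<Sum>y\<in>Lsp. of_bool (covered x y \<and> covered z y \<and> y \<inter> x0 = x \<inter> x0 \<and> z \<inter> x0 = x \<inter> x0))"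
    unfolding opcomp_def L1_def R1_def by (rule sum.cong) auto
  then show ?thesis by (simp add: finite_Lsp Collect_conj_eq Int_commute)
qed

lemma opcomp_R1_L1:
  fixes x0 :: "('a::{field,finite} ^ 'n::finite) set"
  shows "opcomp (R1 x0) (L1 x0) x z =
    of_nat (card {y\<in>Lsp. covered y x \<and> covered y z \<and> y \<inter> x0 = x \<inter> x0 \<and> z \<inter> x0 = x \<inter> x0})"
proof -
  have "opcomp (R1 x0) (L1 x0) x z =
      (\<Sum>y\<in>Lsp. of_bool (covered y x \<and> covered y z \<and> y \<inter> x0 = x \<inter> x0 \<and> z \<inter> x0 = x \<inter> x0))"
    unfolding opcomp_def L1_def R1_def by (rule sum.cong) auto
  then show ?thesis by (simp add: finite_Lsp Collect_conj_eq Int_commute)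
qed

lemma card_common_upper_covers:
  fixes x z :: "('a::{field,finite} ^ 'n::finite) set"
  assumes sx: "vec.subspace x" and sz: "vec.subspace z" and "z \<noteq> x"
  shows "card {y\<in>Lsp. covered x y \<and> covered z y \<and> y \<inter> x0 = x \<inter> x0 \<and> z \<inter> x0 = x \<inter> x0} =
    (if covered (x \<inter> z) x \<and> covered (x \<inter> z) z \<and> z \<inter> x0 = x \<inter> x0 \<and> ssum x z \<inter> x0 = x \<inter> x0
     then 1 else 0)"
proof -
  have "{y\<in>Lsp. covered x y \<and> covered z y \<and> y \<inter> x0 = x \<inter> x0 \<and> z \<inter> x0 = x \<inter> x0} \<subseteq> {ssum x z}"
    using common_upper_cover_eq \<open>z \<noteq> x\<close> by blast
  then show ?thesis
    using covered_ssum_iff_covered_inter[OF sx sz] subspace_ssum[OF sx sz]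
    by (subst card_eq_if_subset_singleton) (auto simp: Lsp_def)
qed

lemma card_common_lower_covers:
  fixes x z :: "('a::{field,finite} ^ 'n::finite) set"
  assumes sx: "vec.subspace x" and sz: "vec.subspace z" and "z \<noteq> x"
  shows "card {y\<in>Lsp. covered y x \<and> covered y z \<and> y \<inter> x0 = x \<inter> x0 \<and> z \<inter> x0 = x \<inter> x0} =
    (if covered (x \<inter> z) x \<and> covered (x \<inter> z) z \<and> z \<inter> x0 = x \<inter> x0 then 1 else 0)"
proof -
  have "{y\<in>Lsp. covered y x \<and> covered y z \<and> y \<inter> x0 = x \<inter> x0 \<and> z \<inter> x0 = x \<inter> x0} \<subseteq> {x \<inter> z}"
    using common_lower_cover_eq \<open>z \<noteq> x\<close> by blast
  then show ?thesis
    using vec.subspace_inter[OF sx sz]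
    by (subst card_eq_if_subset_singleton) (auto simp: Lsp_def)
qed

lemma commutator_L1_R1_off_diagonal:
  fixes x z :: "('a::{field,finite} ^ 'n::finite) set"
  assumes "complementary x0 x1" "vec.subspace x" "vec.subspace z" "z \<noteq> x"
  shows "opcomp (L1 x0) (R1 x0) x z - opcomp (R1 x0) (L1 x0) x z = - D3 x0 x1 x z"
  unfolding opcomp_L1_R1 opcomp_R1_L1 card_common_upper_covers[OF assms(2-4)]
    card_common_lower_covers[OF assms(2-4)] D3_def D3_condition_iff[OF assms(1-3)]
  by auto

lemma qF_square: "complex_of_real (qF TYPE('a::{field,finite})) ^ 2 = of_real (real CARD('a))"
  by (simp add: qF_def flip: of_real_power)

lemma commutator_L1_R1_diagonal:
  fixes x :: "('a::{field,finite} ^ 'n::finite) set"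
  assumes sx: "vec.subspace x" and s0: "vec.subspace x0"
  shows "(complex_of_real (qF TYPE('a)) ^ 2 - 1) * (opcomp (L1 x0) (R1 x0) x x - opcomp (R1 x0) (L1 x0) x x)
    = of_real (real CARD('a) ^ (CARD('n) - vec.dim x)
        - (real CARD('a) ^ (vec.dim x - vec.dim (x \<inter> x0)) + real CARD('a) ^ (vec.dim x0 - vec.dim (x \<inter> x0)) - 1))"
proof -
  define A where "A = card {y\<in>Lsp. covered x y \<and> y \<inter> x0 = x \<inter> x0}"
  define B where "B = card {y\<in>Lsp. covered y x \<and> x \<inter> x0 \<subseteq> y}"
  have "{y\<in>Lsp. covered y x \<and> covered y x \<and> y \<inter> x0 = x \<inter> x0 \<and> x \<inter> x0 = x \<inter> x0}
      = {y\<in>Lsp. covered y x \<and> x \<inter> x0 \<subseteq> y}"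
    unfolding covered_def by blast
  then have B: "opcomp (R1 x0) (L1 x0) x x = of_nat B"
    unfolding B_def by (simp only: opcomp_R1_L1)
  have A: "opcomp (L1 x0) (R1 x0) x x = of_nat A"
    unfolding A_def by (simp add: opcomp_L1_R1)
  have "(real CARD('a) - 1) * (real A - real B)
      = real CARD('a) ^ (CARD('n) - vec.dim x)
        - (real CARD('a) ^ (vec.dim x - vec.dim (x \<inter> x0)) + real CARD('a) ^ (vec.dim x0 - vec.dim (x \<inter> x0)) - 1)"
    using card_upper_covers_meeting[OF sx s0]
      card_lower_covers_containing[OF sx vec.subspace_inter[OF sx s0] Int_lower1]
    unfolding A_def B_def by (simp add: right_diff_distrib mult.commute)
  from arg_cong[OF this, of complex_of_real] show ?thesis
    unfolding qF_square A B by simp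
qed

lemma D4_diagonal:
  fixes x :: "('a::{field,finite} ^ 'n::finite) set"
  assumes sx: "vec.subspace x" and s0: "vec.subspace x0"
  shows "D4 x0 x x = of_real (real CARD('a) ^ (vec.dim x - vec.dim (x \<inter> x0))
    + real CARD('a) ^ (vec.dim x0 - vec.dim (x \<inter> x0)) - 1)"
proof -
  let ?Q = "real CARD('a)" and ?w = "vec.dim (x \<inter> x0)"
  have "?w \<le> vec.dim x" "?w \<le> vec.dim x0" by (simp_all add: vec.dim_subset)
  then have "?Q ^ vec.dim x + ?Q ^ vec.dim x0 = (?Q ^ (vec.dim x - ?w) + ?Q ^ (vec.dim x0 - ?w)) * ?Q ^ ?w"
    by (simp add: distrib_right flip: power_add)
  then show ?thesis
    using card_subspace[OF sx] card_subspace[OF s0] card_subspace[OF vec.subspace_inter[OF sx s0]]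
    by (simp add: D4_def)
qed

lemma D3_diagonal:
  fixes x :: "('a::{field,finite} ^ 'n::finite) set"
  assumes "complementary x0 x1" "vec.subspace x"
  shows "D3 x0 x1 x x = 0"
  using tau_diff_rank_eq_dim[OF assms assms(2) refl refl] by (simp add: D3_def ssum_self[OF assms(2)])

lemma opcomp_diagonal_right:
  fixes A B :: "('a::{field,finite},'n::finite) lop"
  assumes "x \<in> Lsp" "\<And>y. y \<noteq> x \<Longrightarrow> B x y = 0"
  shows "opcomp A B x z = B x x * A x z"
proof -
  have "opcomp A B x z = (\<Sum>y\<in>Lsp. if y = x then B x x * A x z else 0)"
    unfolding opcomp_def using assms(2) by (intro sum.cong) auto
  then show ?thesis using assms(1) by simp
qed

lemma opcomp_D1_D2_off_diagonal:
  fixes x :: "('a::{field,finite} ^ 'n::finite) set"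
  assumes "x \<in> Lsp" "z \<noteq> x"
  shows "opcomp (D1 x0) (D2 x0) x z = 0"
  using opcomp_diagonal_right[OF assms(1)] assms(2) by (simp add: D1_def D2_def)

lemma scaled_opcomp_D1_D2_diagonal:
  fixes x :: "('a::{field,finite} ^ 'n::finite) set"
  assumes "x \<in> Lsp" and s0: "vec.subspace x0"
  shows "complex_of_real (qF TYPE('a)) ^ CARD('n) * opcomp (D1 x0) (D2 x0) x x
    = of_real (real CARD('a) ^ (CARD('n) - vec.dim x))"
proof -
  define r where "r = qF TYPE('a)"
  have "r > 0" unfolding r_def qF_def using one_less_card_field[where 'a='a] by simp
  have sx: "vec.subspace x" using assms(1) by (simp add: Lsp_def)
  let ?n = "CARD('n)" and ?k = "vec.dim x" and ?d = "vec.dim x0"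
  let ?e2 = "real ?d - 2 * real (vec.dim (x \<inter> x0))"
  let ?e1 = "real (?n - ?d) - 2 * (real (vec.dim (ssum x x0)) - real ?d)"
  have "real ?n + (?e2 + ?e1) = real (2 * (?n - ?k))"
    using dim_ssum_inter[OF sx s0] dim_subset_UNIV_cart_gen[of x] dim_subset_UNIV_cart_gen[of x0]
    by (simp add: of_nat_diff)
  then have "r ^ ?n * (r powr ?e2 * r powr ?e1) = r ^ (2 * (?n - ?k))"
    using \<open>r > 0\<close> by (simp add: powr_add [symmetric] powr_realpow [symmetric])
  also have "\<dots> = real CARD('a) ^ (?n - ?k)"
    unfolding r_def qF_def power_mult by simp
  finally show ?thesis
    using opcomp_diagonal_right[OF assms(1), of "D2 x0" "D1 x0" x]
    by (simp add: D1_def D2_def r_def flip: of_real_power of_real_mult)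
qed

theorem mainTheorem15:
  fixes x0 x1 x z :: "('a::{field,finite} ^ 'n::finite) set"
  assumes "vec.subspace x0" and "vec.subspace x1"
    and "x0 \<inter> x1 = {0}" and "ssum x0 x1 = UNIV"
    and "x \<in> Lsp" and "z \<in> Lsp"
  shows "(complex_of_real (qF TYPE('a)) ^ 2 - 1) * (opcomp (L1 x0) (R1 x0) x z - opcomp (R1 x0) (L1 x0) x z)
       = complex_of_real (qF TYPE('a)) ^ CARD('n) * opcomp (D1 x0) (D2 x0) x z
         - (complex_of_real (qF TYPE('a)) ^ 2 - 1) * D3 x0 x1 x z - D4 x0 x z"
proof -
  have c: "complementary x0 x1" using assms(1-4) by (simp add: complementary_def)
  have sx: "vec.subspace x" and sz: "vec.subspace z" using assms(5,6) by (simp_all add: Lsp_def)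
  show ?thesis
  proof (cases "z = x")
    case True
    then show ?thesis
      using commutator_L1_R1_diagonal[OF sx assms(1)] scaled_opcomp_D1_D2_diagonal[OF assms(5,1)]
        D3_diagonal[OF c sx] D4_diagonal[OF sx assms(1)]
      by (simp only: of_real_diff mult_zero_right diff_zero)
  next
    case False
    then show ?thesis
      unfolding commutator_L1_R1_off_diagonal[OF c sx sz False] opcomp_D1_D2_off_diagonal[OF assms(5) False]
      by (simp add: D4_def)
  qed
qed

end
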